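(* Let $\Gamma$ be a distance-regular graph with diameter $D\ge3$ and $a_1\ne0$, and let $\sigma_0,\dots,\sigma_D$ be a nontrivial pseudo cosine sequence. Then there exists at most one nontrivial pseudo cosine sequence $\rho_0,\dots,\rho_D$ such that $\sigma_0,\dots,\sigma_D$ and $\rho_0,\dots,\rho_D$ form a tight pair. If such $\rho_0,\dots,\rho_D$ exists, then the corresponding auxiliary parameter is unique.
   Context: $\Gamma$ is a finite connected undirected graph without loops or multiple edges, distance-regular with diameter $D$, intersection numbers $a_i,b_i,c_i$ ($c_0=0$, $b_D=0$), valency $k$, $c_i+a_i+b_i=k$. For $\theta\in\mathbb{R}$ the pseudo cosine sequence for $\theta$ is the sequence of reals $\sigma_0,\dots,\sigma_D$ with $\sigma_0=1$ and $c_i\sigma_{i-1}+a_i\sigma_i+b_i\sigma_{i+1}=\theta\sigma_i$ for $0\le i\le D-1$; nontrivial means $\sigma_1\ne1$. Pseudo cosine sequences $\sigma_i$, $\rho_i$ form a tight pair if $(\sigma_i\rho_i)_{i=0}^D$ is a pseudo cosine sequence. For a tight pair of nontrivial pseudo cosine sequences, an auxiliary parameter is a real $\varepsilon$ with $\sigma_i\rho_i-\sigma_{i-1}\rho_{i-1}=\varepsilon(\sigma_{i-1}\rho_i-\sigma_i\rho_{i-1})$ for $1\le i\le D$. *)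

theory Defs
  imports Complex_Main
begin

definition simple_graph :: "'a set \<Rightarrow> ('a \<Rightarrow> 'a \<Rightarrow> bool) \<Rightarrow> bool" where
  "simple_graph V E \<longleftrightarrow> finite V \<and> V \<noteq> {} \<and>
     (\<forall>x y. E x y \<longrightarrow> x \<in> V \<and> y \<in> V) \<and>
     (\<forall>x y. E x y \<longrightarrow> E y x) \<and> (\<forall>x. \<not> E x x)"

fun walk_len :: "'a set \<Rightarrow> ('a \<Rightarrow> 'a \<Rightarrow> bool) \<Rightarrow> nat \<Rightarrow> 'a \<Rightarrow> 'a \<Rightarrow> bool" where
  "walk_len V E 0 x y \<longleftrightarrow> x = y"
| "walk_len V E (Suc n) x y \<longleftrightarrow> (\<exists>z\<in>V. E x z \<and> walk_len V E n z y)"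

definition connected_graph :: "'a set \<Rightarrow> ('a \<Rightarrow> 'a \<Rightarrow> bool) \<Rightarrow> bool" where
  "connected_graph V E \<longleftrightarrow> (\<forall>x\<in>V. \<forall>y\<in>V. \<exists>n. walk_len V E n x y)"

definition gdist :: "'a set \<Rightarrow> ('a \<Rightarrow> 'a \<Rightarrow> bool) \<Rightarrow> 'a \<Rightarrow> 'a \<Rightarrow> nat" where
  "gdist V E x y = (LEAST n. walk_len V E n x y)"

definition diameter :: "'a set \<Rightarrow> ('a \<Rightarrow> 'a \<Rightarrow> bool) \<Rightarrow> nat" where
  "diameter V E = Max {gdist V E x y | x y. x \<in> V \<and> y \<in> V}"

definition distance_regular ::
  "'a set \<Rightarrow> ('a \<Rightarrow> 'a \<Rightarrow> bool) \<Rightarrow> nat \<Rightarrow> (nat \<Rightarrow> nat) \<Rightarrow> (nat \<Rightarrow> nat) \<Rightarrow> (nat \<Rightarrow> nat) \<Rightarrow> bool" where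
  "distance_regular V E D a b c \<longleftrightarrow>
     simple_graph V E \<and> connected_graph V E \<and> diameter V E = D \<and> c 0 = 0 \<and> b D = 0 \<and>
     (\<forall>x\<in>V. \<forall>y\<in>V. let i = gdist V E x y in
        (i \<ge> 1 \<longrightarrow> card {z\<in>V. E y z \<and> gdist V E x z = i - 1} = c i) \<and>
        card {z\<in>V. E y z \<and> gdist V E x z = i} = a i \<and>
        card {z\<in>V. E y z \<and> gdist V E x z = i + 1} = b i)"

text \<open>Pseudo cosine sequence for theta (indices 0..D; values outside are irrelevant).\<close>
definition pseudo_cosine_for ::
  "nat \<Rightarrow> (nat \<Rightarrow> nat) \<Rightarrow> (nat \<Rightarrow> nat) \<Rightarrow> (nat \<Rightarrow> nat) \<Rightarrow> real \<Rightarrow> (nat \<Rightarrow> real) \<Rightarrow> bool" where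
  "pseudo_cosine_for D a b c \<theta> \<sigma> \<longleftrightarrow> \<sigma> 0 = 1 \<and>
     (\<forall>i<D. (if i = 0 then 0 else real (c i) * \<sigma> (i - 1)) + real (a i) * \<sigma> i
              + real (b i) * \<sigma> (i + 1) = \<theta> * \<sigma> i)"

definition pseudo_cosine ::
  "nat \<Rightarrow> (nat \<Rightarrow> nat) \<Rightarrow> (nat \<Rightarrow> nat) \<Rightarrow> (nat \<Rightarrow> nat) \<Rightarrow> (nat \<Rightarrow> real) \<Rightarrow> bool" where
  "pseudo_cosine D a b c \<sigma> \<longleftrightarrow> (\<exists>\<theta>. pseudo_cosine_for D a b c \<theta> \<sigma>)"

definition nontrivial_pseudo_cosine ::
  "nat \<Rightarrow> (nat \<Rightarrow> nat) \<Rightarrow> (nat \<Rightarrow> nat) \<Rightarrow> (nat \<Rightarrow> nat) \<Rightarrow> (nat \<Rightarrow> real) \<Rightarrow> bool" where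
  "nontrivial_pseudo_cosine D a b c \<sigma> \<longleftrightarrow> pseudo_cosine D a b c \<sigma> \<and> \<sigma> 1 \<noteq> 1"

definition tight_pair ::
  "nat \<Rightarrow> (nat \<Rightarrow> nat) \<Rightarrow> (nat \<Rightarrow> nat) \<Rightarrow> (nat \<Rightarrow> nat) \<Rightarrow> (nat \<Rightarrow> real) \<Rightarrow> (nat \<Rightarrow> real) \<Rightarrow> bool" where
  "tight_pair D a b c \<sigma> \<rho> \<longleftrightarrow> pseudo_cosine D a b c \<sigma> \<and> pseudo_cosine D a b c \<rho> \<and>
     pseudo_cosine D a b c (\<lambda>i. \<sigma> i * \<rho> i)"

definition auxiliary_parameter ::
  "nat \<Rightarrow> (nat \<Rightarrow> real) \<Rightarrow> (nat \<Rightarrow> real) \<Rightarrow> real \<Rightarrow> bool" where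
  "auxiliary_parameter D \<sigma> \<rho> \<epsilon> \<longleftrightarrow>
     (\<forall>i. 1 \<le> i \<and> i \<le> D \<longrightarrow>
        \<sigma> i * \<rho> i - \<sigma> (i - 1) * \<rho> (i - 1) = \<epsilon> * (\<sigma> (i - 1) * \<rho> i - \<sigma> i * \<rho> (i - 1)))"

end

theory Submission
  imports Defs
begin

(*
  Write s = sigma 1, r = rho 1 and N x = k x^2 - a1 x - 1 with k = b0 = 1 + a1 + b1.  The
  recurrence at i = 0 and i = 1 gives theta = k * sigma 1 and b1 * sigma 2 = N (sigma 1) for every
  pseudo cosine sequence; applied to sigma, rho and their product, tightness becomes
  N s * N r = b1 * N (s r).  As a polynomial in r this difference factors as (r - 1) (A r - C)
  with A, C depending only on s, and a1, b1 > 0 force A <> 0.  So a nontrivial partner has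
  r = C / A, and it is determined by r because b_i > 0 for i < D.  At i = 1 an auxiliary
  parameter satisfies s r - 1 = eps (r - s), and r = s is impossible: it would give
  s = r = -1, which violates N s * N r = b1 * N (s r) when a1 > 0.
*)

lemma walk_len_Suc_right:
  assumes "simple_graph V E"
  shows "walk_len V E (Suc n) x y \<longleftrightarrow> (\<exists>z. walk_len V E n x z \<and> E z y)"
proof (induction n arbitrary: x)
  case 0
  then show ?case using assms by (auto simp: simple_graph_def)
next
  case (Suc n)
  have "walk_len V E (Suc (Suc n)) x y \<longleftrightarrow> (\<exists>z\<in>V. E x z \<and> (\<exists>w. walk_len V E n z w \<and> E w y))"
    using Suc.IH by simp
  also have "\<dots> \<longleftrightarrow> (\<exists>w. walk_len V E (Suc n) x w \<and> E w y)" by auto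
  finally show ?case .
qed

lemma walk_len_gdist:
  assumes "connected_graph V E" "x \<in> V" "y \<in> V"
  shows "walk_len V E (gdist V E x y) x y"
  using assms unfolding gdist_def connected_graph_def by (metis LeastI_ex)

lemma gdist_le: "walk_len V E n x y \<Longrightarrow> gdist V E x y \<le> n"
  unfolding gdist_def by (rule Least_le)

lemma gdist_self [simp]: "gdist V E x x = 0"
  using gdist_le[of V E 0 x x] by simp

lemma gdist_eq_0D:
  assumes "connected_graph V E" "x \<in> V" "y \<in> V" "gdist V E x y = 0"
  shows "x = y"
  using walk_len_gdist[OF assms(1-3)] assms(4) by simp

lemma gdist_eq_1D:
  assumes "connected_graph V E" "x \<in> V" "y \<in> V" "gdist V E x y = 1"
  shows "E x y"
  using walk_len_gdist[OF assms(1-3)] assms(4) by auto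

lemma gdist_adjacent_le:
  assumes "simple_graph V E" "connected_graph V E" "x \<in> V" "E y z"
  shows "gdist V E x z \<le> Suc (gdist V E x y)"
proof -
  have "y \<in> V" using assms(1,4) by (auto simp: simple_graph_def)
  then have "walk_len V E (Suc (gdist V E x y)) x z"
    using walk_len_gdist[OF assms(2,3)] walk_len_Suc_right[OF assms(1)] assms(4) by blast
  then show ?thesis by (rule gdist_le)
qed

lemma gdist_SucE:
  assumes "simple_graph V E" "connected_graph V E" "x \<in> V" "y \<in> V"
    and "gdist V E x y = Suc j"
  obtains z where "z \<in> V" "E z y" "gdist V E x z = j"
proof -
  have "walk_len V E (Suc j) x y" using walk_len_gdist[OF assms(2-4)] assms(5) by simp
  then obtain z where "walk_len V E j x z" and "E z y" using walk_len_Suc_right[OF assms(1)] by blast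
  moreover have "z \<in> V" using assms(1) \<open>E z y\<close> by (auto simp: simple_graph_def)
  moreover have "gdist V E x z \<le> j" using gdist_le[OF \<open>walk_len V E j x z\<close>] .
  moreover have "Suc j \<le> Suc (gdist V E x z)"
    using gdist_adjacent_le[OF assms(1-3) \<open>E z y\<close>] assms(5) by simp
  ultimately show thesis using that by simp
qed

lemma gdist_intermediate:
  assumes "simple_graph V E" "connected_graph V E" "x \<in> V"
  shows "y \<in> V \<Longrightarrow> j \<le> gdist V E x y \<Longrightarrow> \<exists>z\<in>V. gdist V E x z = j"
proof (induction "gdist V E x y" arbitrary: y)
  case 0
  then show ?case by force
next
  case (Suc n)
  show ?case
  proof (cases "j = Suc n")
    case True
    then show ?thesis using Suc.hyps(2) Suc.prems by metis
  next
    case False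
    obtain w where "w \<in> V" "gdist V E x w = n"
      using gdist_SucE[OF assms Suc.prems(1) Suc.hyps(2)[symmetric]] by blast
    then show ?thesis using Suc False by auto
  qed
qed

lemma diameter_attained:
  assumes "simple_graph V E"
  obtains x y where "x \<in> V" "y \<in> V" "gdist V E x y = diameter V E"
proof -
  let ?S = "{gdist V E x y | x y. x \<in> V \<and> y \<in> V}"
  have "?S = (\<lambda>(x, y). gdist V E x y) ` (V \<times> V)" by auto
  then have "finite ?S" using assms by (simp add: simple_graph_def)
  moreover have "?S \<noteq> {}" using assms by (simp add: simple_graph_def) blast
  ultimately have "diameter V E \<in> ?S" unfolding diameter_def by (rule Max_in)
  then obtain x y where "x \<in> V" "y \<in> V" "diameter V E = gdist V E x y" by blast
  then show thesis using that by simp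
qed

lemma distance_regularD:
  assumes "distance_regular V E D a b c"
  shows "simple_graph V E" "connected_graph V E" "diameter V E = D"
  using assms unfolding distance_regular_def by auto

lemma distance_regular_card:
  assumes "distance_regular V E D a b c" "x \<in> V" "y \<in> V" "gdist V E x y = i"
  shows "1 \<le> i \<Longrightarrow> card {z\<in>V. E y z \<and> gdist V E x z = i - 1} = c i"
    and "card {z\<in>V. E y z \<and> gdist V E x z = i} = a i"
    and "card {z\<in>V. E y z \<and> gdist V E x z = i + 1} = b i"
  using assms unfolding distance_regular_def Let_def by auto

lemma distance_regular_card_neighbours:
  assumes dr: "distance_regular V E D a b c" and "x \<in> V" "y \<in> V" "gdist V E x y = i"
  shows "card {z\<in>V. E y z} = (if i = 0 then 0 else c i) + a i + b i"
proof -
  note sg = distance_regularD(1)[OF dr] and cg = distance_regularD(2)[OF dr]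
  let ?N = "\<lambda>j. {z\<in>V. E y z \<and> gdist V E x z = j}"
  have fin: "finite (?N j)" for j using sg by (simp add: simple_graph_def)
  have near: "gdist V E x z \<in> {i - 1, i, i + 1}" if "E y z" for z
  proof -
    have "E z y" using sg that by (simp add: simple_graph_def)
    then have "i \<le> Suc (gdist V E x z)"
      using gdist_adjacent_le[OF sg cg \<open>x \<in> V\<close>] assms(4) by blast
    moreover have "gdist V E x z \<le> Suc i"
      using gdist_adjacent_le[OF sg cg \<open>x \<in> V\<close> that] assms(4) by blast
    ultimately show ?thesis by (simp add: le_Suc_eq) linarith
  qed
  have "{z\<in>V. E y z} = (\<Union>j\<in>{i - 1, i, i + 1}. ?N j)" using near by auto
  also have "card \<dots> = (\<Sum>j\<in>{i - 1, i, i + 1}. card (?N j))"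
    using fin by (intro card_UN_disjoint) auto
  finally have "card {z\<in>V. E y z} = (\<Sum>j\<in>{i - 1, i, i + 1}. card (?N j))" .
  then show ?thesis
    using distance_regular_card[OF assms] by (cases i) auto
qed

lemma distance_regular_obtain_pair:
  assumes dr: "distance_regular V E D a b c" and "i \<le> D"
  obtains x y where "x \<in> V" "y \<in> V" "gdist V E x y = i"
proof -
  note sg = distance_regularD(1)[OF dr] and cg = distance_regularD(2)[OF dr]
  obtain x y where "x \<in> V" "y \<in> V" "gdist V E x y = D"
    using diameter_attained[OF sg] distance_regularD(3)[OF dr] by metis
  then show thesis using gdist_intermediate[OF sg cg] assms(2) that by metis
qed

lemma distance_regular_a_0:
  assumes dr: "distance_regular V E D a b c"
  shows "a 0 = 0"
proof -
  note sg = distance_regularD(1)[OF dr] and cg = distance_regularD(2)[OF dr]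
  obtain x where "x \<in> V" using sg by (auto simp: simple_graph_def)
  have "{z\<in>V. E x z \<and> gdist V E x z = 0} = {}"
    using gdist_eq_0D[OF cg \<open>x \<in> V\<close>] sg unfolding simple_graph_def by blast
  then show ?thesis
    using distance_regular_card(2)[OF dr \<open>x \<in> V\<close> \<open>x \<in> V\<close> gdist_self] by (metis card.empty)
qed

lemma distance_regular_c_1:
  assumes dr: "distance_regular V E D a b c" and "1 \<le> D"
  shows "c 1 = 1"
proof -
  note sg = distance_regularD(1)[OF dr] and cg = distance_regularD(2)[OF dr]
  obtain x y where xy: "x \<in> V" "y \<in> V" "gdist V E x y = 1"
    using distance_regular_obtain_pair[OF assms] .
  then have "E y x" using gdist_eq_1D[OF cg xy] sg by (simp add: simple_graph_def)
  then have "{z\<in>V. E y z \<and> gdist V E x z = 1 - 1} = {x}"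
    using gdist_eq_0D[OF cg \<open>x \<in> V\<close>] \<open>x \<in> V\<close> by auto
  then show ?thesis using distance_regular_card(1)[OF dr xy] by simp
qed

lemma distance_regular_valency:
  assumes dr: "distance_regular V E D a b c" and "1 \<le> D"
  shows "b 0 = c 1 + a 1 + b 1"
proof -
  obtain x y where xy: "x \<in> V" "y \<in> V" "gdist V E x y = 1"
    using distance_regular_obtain_pair[OF assms] .
  show ?thesis
    using distance_regular_card_neighbours[OF dr xy] distance_regular_a_0[OF dr]
      distance_regular_card_neighbours[OF dr \<open>y \<in> V\<close> \<open>y \<in> V\<close> gdist_self] by simp
qed

lemma distance_regular_b_pos:
  assumes dr: "distance_regular V E D a b c" and "j < D"
  shows "0 < b j"
proof -
  note sg = distance_regularD(1)[OF dr] and cg = distance_regularD(2)[OF dr]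
  obtain x z where "x \<in> V" "z \<in> V" "gdist V E x z = Suc j"
    using distance_regular_obtain_pair[OF dr, of "Suc j"] assms(2) by auto
  then obtain w where "w \<in> V" "E w z" "gdist V E x w = j"
    using gdist_SucE[OF sg cg] by metis
  then have "z \<in> {u\<in>V. E w u \<and> gdist V E x u = j + 1}"
    using \<open>z \<in> V\<close> \<open>gdist V E x z = Suc j\<close> by simp
  moreover have "finite {u\<in>V. E w u \<and> gdist V E x u = j + 1}"
    using sg by (simp add: simple_graph_def)
  ultimately show ?thesis
    using distance_regular_card(3)[OF dr \<open>x \<in> V\<close> \<open>w \<in> V\<close> \<open>gdist V E x w = j\<close>]
    by (metis card_gt_0_iff empty_iff)
qed

locale intersection_array =
  fixes D :: nat and a b c :: "nat \<Rightarrow> nat"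
  assumes a_0: "a 0 = 0" and c_1: "c 1 = 1" and valency: "b 0 = c 1 + a 1 + b 1"
    and b_pos: "j < D \<Longrightarrow> 0 < b j" and diameter_ge_2: "2 \<le> D"

lemma distance_regular_intersection_array:
  assumes dr: "distance_regular V E D a b c" and "2 \<le> D"
  shows "intersection_array D a b c"
proof
  show "a 0 = 0" using distance_regular_a_0[OF dr] .
  show "c 1 = 1" using distance_regular_c_1[OF dr] assms(2) by simp
  show "b 0 = c 1 + a 1 + b 1" using distance_regular_valency[OF dr] assms(2) by simp
  show "0 < b j" if "j < D" for j using distance_regular_b_pos[OF dr that] .
qed (use assms(2) in simp)

definition second_cosine_numerator :: "real \<Rightarrow> real \<Rightarrow> real \<Rightarrow> real" where
  "second_cosine_numerator a1 b1 x = (1 + a1 + b1) * x\<^sup>2 - a1 * x - 1"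

lemma second_cosine_numerator_product_factor:
  "second_cosine_numerator a1 b1 s * second_cosine_numerator a1 b1 r
     - b1 * second_cosine_numerator a1 b1 (s * r)
   = (r - 1) * ((1 + a1 + b1) * (s - 1) * ((1 + a1) * s + 1) * r
                - (b1 - (1 + a1 + b1) * s\<^sup>2 + a1 * s + 1))"
  by (simp add: second_cosine_numerator_def algebra_simps power2_eq_square)

lemma second_cosine_numerator_product_root_unique:
  fixes a1 b1 s r r' :: real
  defines "N \<equiv> second_cosine_numerator a1 b1"
  assumes "0 < a1" "0 < b1" "s \<noteq> 1" "r \<noteq> 1" "r' \<noteq> 1"
    and "N s * N r = b1 * N (s * r)" and "N s * N r' = b1 * N (s * r')"
  shows "r = r'"
proof -
  define A where "A = (1 + a1 + b1) * (s - 1) * ((1 + a1) * s + 1)"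
  define C where "C = b1 - (1 + a1 + b1) * s\<^sup>2 + a1 * s + 1"
  have "(x - 1) * (A * x - C) = 0" if "N s * N x = b1 * N (s * x)" for x
    using that second_cosine_numerator_product_factor[of a1 b1 s x]
    unfolding N_def A_def C_def by linarith
  then have "(r - 1) * (A * r - C) = 0" "(r' - 1) * (A * r' - C) = 0"
    using assms(7,8) by blast+
  then have "A * r = C" "A * r' = C" using assms(5,6) by simp_all
  moreover have "A \<noteq> 0"
  proof
    assume "A = 0"
    then have s: "(1 + a1) * s + 1 = 0" using assms(2-4) unfolding A_def by auto
    have "(1 + a1) * C = - a1 * b1 * (s - 1) + ((1 + a1) * s + 1) * (b1 - (1 + a1 + b1) * s + 1 + a1)"
      unfolding C_def by (simp add: algebra_simps power2_eq_square)
    then have "(1 + a1) * C \<noteq> 0" using s assms(2-4) by simp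
    moreover have "C = 0" using \<open>A * r = C\<close> \<open>A = 0\<close> by simp
    ultimately show False by simp
  qed
  ultimately show ?thesis by (metis mult_left_cancel)
qed

lemma second_cosine_numerator_product_minus_one:
  fixes a1 b1 :: real
  defines "N \<equiv> second_cosine_numerator a1 b1"
  assumes "0 < a1" "0 \<le> b1"
  shows "N (-1) * N (-1) \<noteq> b1 * N ((-1) * (-1))"
proof -
  have "N (-1) * N (-1) - b1 * N ((-1) * (-1)) = 4 * a1 * (a1 + b1)"
    unfolding N_def second_cosine_numerator_def by (simp add: algebra_simps power2_eq_square)
  then show ?thesis using assms(2,3) by (smt (verit) mult_pos_pos)
qed

lemma pseudo_cosine_forD:
  fixes \<theta> :: real and \<sigma> :: "nat \<Rightarrow> real"
  assumes "pseudo_cosine_for D a b c \<theta> \<sigma>"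
  shows "\<sigma> 0 = 1"
    and "i < D \<Longrightarrow> (if i = 0 then 0 else c i * \<sigma> (i - 1)) + a i * \<sigma> i + b i * \<sigma> (i + 1) = \<theta> * \<sigma> i"
  using assms unfolding pseudo_cosine_for_def by auto

context intersection_array
begin

lemma pseudo_cosine_for_eigenvalue:
  fixes \<theta> :: real and \<sigma> :: "nat \<Rightarrow> real"
  assumes "pseudo_cosine_for D a b c \<theta> \<sigma>"
  shows "\<theta> = b 0 * \<sigma> 1"
  using pseudo_cosine_forD(1)[OF assms] pseudo_cosine_forD(2)[OF assms, of 0] diameter_ge_2 a_0
  by simp

lemma pseudo_cosine_for_second:
  fixes \<theta> :: real and \<sigma> :: "nat \<Rightarrow> real"
  assumes "pseudo_cosine_for D a b c \<theta> \<sigma>"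
  shows "b 1 * \<sigma> 2 = second_cosine_numerator (a 1) (b 1) (\<sigma> 1)"
proof -
  have "c 1 * \<sigma> 0 + a 1 * \<sigma> 1 + b 1 * \<sigma> 2 = \<theta> * \<sigma> 1"
    using pseudo_cosine_forD(2)[OF assms, of 1] diameter_ge_2 by (simp add: numeral_2_eq_2)
  then show ?thesis
    using pseudo_cosine_forD(1)[OF assms] pseudo_cosine_for_eigenvalue[OF assms] c_1 valency
    unfolding second_cosine_numerator_def by (simp add: algebra_simps power2_eq_square)
qed

lemma pseudo_cosine_for_unique:
  fixes \<theta> :: real and \<sigma> \<rho> :: "nat \<Rightarrow> real"
  assumes \<sigma>: "pseudo_cosine_for D a b c \<theta> \<sigma>" and \<rho>: "pseudo_cosine_for D a b c \<theta> \<rho>"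
  shows "i \<le> D \<Longrightarrow> \<sigma> i = \<rho> i"
proof (induction i rule: less_induct)
  case (less i)
  show ?case
  proof (cases i)
    case 0
    then show ?thesis using pseudo_cosine_forD(1)[OF \<sigma>] pseudo_cosine_forD(1)[OF \<rho>] by simp
  next
    case (Suc m)
    then have "m < D" using less.prems by simp
    have "\<sigma> m = \<rho> m" and "m \<noteq> 0 \<Longrightarrow> \<sigma> (m - 1) = \<rho> (m - 1)"
      using less Suc by auto
    then have "(if m = 0 then 0 else c m * \<sigma> (m - 1)) = (if m = 0 then 0 else c m * \<rho> (m - 1))"
      and "a m * \<sigma> m = a m * \<rho> m" and "\<theta> * \<sigma> m = \<theta> * \<rho> m"
      by simp_all
    then have "b m * \<sigma> (m + 1) = b m * \<rho> (m + 1)"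
      using pseudo_cosine_forD(2)[OF \<sigma> \<open>m < D\<close>] pseudo_cosine_forD(2)[OF \<rho> \<open>m < D\<close>]
      by linarith
    then have "\<sigma> (m + 1) = \<rho> (m + 1)" using b_pos[OF \<open>m < D\<close>] by simp
    then show ?thesis using Suc by simp
  qed
qed

lemma pseudo_cosine_eqI:
  fixes \<sigma> \<rho> :: "nat \<Rightarrow> real"
  assumes "pseudo_cosine D a b c \<sigma>" "pseudo_cosine D a b c \<rho>" "\<sigma> 1 = \<rho> 1" "i \<le> D"
  shows "\<sigma> i = \<rho> i"
proof -
  obtain \<theta> \<theta>' where \<sigma>: "pseudo_cosine_for D a b c \<theta> \<sigma>" and \<rho>: "pseudo_cosine_for D a b c \<theta>' \<rho>"
    using assms(1,2) unfolding pseudo_cosine_def by blast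
  have "\<theta> = \<theta>'"
    using pseudo_cosine_for_eigenvalue[OF \<sigma>] pseudo_cosine_for_eigenvalue[OF \<rho>] assms(3) by simp
  then show ?thesis using pseudo_cosine_for_unique[OF \<sigma>] \<rho> assms(4) by simp
qed

lemma tight_pair_second_cosine_numerator:
  fixes \<sigma> \<rho> :: "nat \<Rightarrow> real" and N :: "real \<Rightarrow> real"
  defines "N \<equiv> second_cosine_numerator (a 1) (b 1)"
  assumes "tight_pair D a b c \<sigma> \<rho>"
  shows "N (\<sigma> 1) * N (\<rho> 1) = b 1 * N (\<sigma> 1 * \<rho> 1)"
proof -
  obtain \<theta>\<^sub>\<sigma> \<theta>\<^sub>\<rho> \<theta> where "pseudo_cosine_for D a b c \<theta>\<^sub>\<sigma> \<sigma>" "pseudo_cosine_for D a b c \<theta>\<^sub>\<rho> \<rho>"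
    and "pseudo_cosine_for D a b c \<theta> (\<lambda>i. \<sigma> i * \<rho> i)"
    using assms(2) unfolding tight_pair_def pseudo_cosine_def by blast
  from this[THEN pseudo_cosine_for_second]
  have "N (\<sigma> 1) * N (\<rho> 1) = (b 1 * \<sigma> 2) * (b 1 * \<rho> 2)"
    and "b 1 * (\<sigma> 2 * \<rho> 2) = N (\<sigma> 1 * \<rho> 1)"
    unfolding N_def by simp_all
  then show ?thesis by (simp add: algebra_simps)
qed

lemma tight_pair_partner_unique:
  assumes "a 1 \<noteq> 0" "nontrivial_pseudo_cosine D a b c \<sigma>"
    and "nontrivial_pseudo_cosine D a b c \<rho>" "tight_pair D a b c \<sigma> \<rho>"
    and "nontrivial_pseudo_cosine D a b c \<rho>'" "tight_pair D a b c \<sigma> \<rho>'"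
    and "i \<le> D"
  shows "\<rho> i = \<rho>' i"
proof -
  have "\<sigma> 1 \<noteq> 1" "\<rho> 1 \<noteq> 1" "\<rho>' 1 \<noteq> 1"
    and pc: "pseudo_cosine D a b c \<rho>" "pseudo_cosine D a b c \<rho>'"
    using assms(2,3,5) unfolding nontrivial_pseudo_cosine_def by auto
  moreover have "0 < real (a 1)" "0 < real (b 1)"
    using assms(1) b_pos[of 1] diameter_ge_2 by auto
  ultimately have "\<rho> 1 = \<rho>' 1"
    using second_cosine_numerator_product_root_unique
      tight_pair_second_cosine_numerator[OF assms(4)]
      tight_pair_second_cosine_numerator[OF assms(6)] by blast
  then show ?thesis using pseudo_cosine_eqI[OF pc] assms(7) by blast
qed

lemma tight_pair_auxiliary_parameter_unique:
  assumes "a 1 \<noteq> 0" "nontrivial_pseudo_cosine D a b c \<sigma>" "tight_pair D a b c \<sigma> \<rho>"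
    and "auxiliary_parameter D \<sigma> \<rho> \<epsilon>" "auxiliary_parameter D \<sigma> \<rho> \<epsilon>'"
  shows "\<epsilon> = \<epsilon>'"
proof -
  have "\<sigma> 0 = 1" "\<rho> 0 = 1"
    using assms(3) unfolding tight_pair_def pseudo_cosine_def pseudo_cosine_for_def by auto
  then have aux: "\<sigma> 1 * \<rho> 1 - 1 = e * (\<rho> 1 - \<sigma> 1)"
    if "auxiliary_parameter D \<sigma> \<rho> e" for e
    using that[unfolded auxiliary_parameter_def, rule_format, of 1] diameter_ge_2 by simp
  have "\<rho> 1 \<noteq> \<sigma> 1"
  proof
    assume "\<rho> 1 = \<sigma> 1"
    then have "\<sigma> 1 * \<sigma> 1 = 1" using aux[OF assms(4)] by simp
    then have "\<sigma> 1 = -1"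
      using assms(2) unfolding nontrivial_pseudo_cosine_def by (simp add: square_eq_1_iff)
    moreover have "0 < real (a 1)" using assms(1) by simp
    ultimately show False
      using tight_pair_second_cosine_numerator[OF assms(3)] \<open>\<rho> 1 = \<sigma> 1\<close>
        second_cosine_numerator_product_minus_one[of "real (a 1)" "real (b 1)"] by simp
  qed
  then show ?thesis using aux[OF assms(4)] aux[OF assms(5)] by simp
qed

end

theorem corollary12p2:
  fixes V :: "'a set" and E :: "'a \<Rightarrow> 'a \<Rightarrow> bool" and D :: nat
    and a b c :: "nat \<Rightarrow> nat" and \<sigma> :: "nat \<Rightarrow> real"
  assumes "distance_regular V E D a b c"
    and "D \<ge> 3"
    and "a 1 \<noteq> 0"
    and "nontrivial_pseudo_cosine D a b c \<sigma>"
  shows "(\<forall>\<rho> \<rho>'. nontrivial_pseudo_cosine D a b c \<rho> \<and> tight_pair D a b c \<sigma> \<rho> \<and>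
                  nontrivial_pseudo_cosine D a b c \<rho>' \<and> tight_pair D a b c \<sigma> \<rho>'
                  \<longrightarrow> (\<forall>i\<le>D. \<rho> i = \<rho>' i))
       \<and> (\<forall>\<rho>. nontrivial_pseudo_cosine D a b c \<rho> \<and> tight_pair D a b c \<sigma> \<rho> \<longrightarrow>
              (\<forall>\<epsilon> \<epsilon>'. auxiliary_parameter D \<sigma> \<rho> \<epsilon> \<and> auxiliary_parameter D \<sigma> \<rho> \<epsilon>'
                        \<longrightarrow> \<epsilon> = \<epsilon>'))"
proof -
  interpret intersection_array D a b c
    using distance_regular_intersection_array[OF assms(1)] assms(2) by simp
  show ?thesis
  proof (intro conjI allI impI)
    fix \<rho> \<rho>' i
    assume "nontrivial_pseudo_cosine D a b c \<rho> \<and> tight_pair D a b c \<sigma> \<rho> \<and>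
      nontrivial_pseudo_cosine D a b c \<rho>' \<and> tight_pair D a b c \<sigma> \<rho>'" and "i \<le> D"
    then show "\<rho> i = \<rho>' i" using tight_pair_partner_unique[OF assms(3,4)] by blast
  next
    fix \<rho> \<epsilon> \<epsilon>'
    assume "nontrivial_pseudo_cosine D a b c \<rho> \<and> tight_pair D a b c \<sigma> \<rho>"
      and "auxiliary_parameter D \<sigma> \<rho> \<epsilon> \<and> auxiliary_parameter D \<sigma> \<rho> \<epsilon>'"
    then show "\<epsilon> = \<epsilon>'" using tight_pair_auxiliary_parameter_unique[OF assms(3,4)] by blast
  qed
qed

end
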